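(* Let $0<\mu\leq L$ and $c\geq 0$, and let $I=\left(0, \tfrac{2\mu}{\mu L+c^2}\right)$. Define $u:I\to\mathbb{R}$ by $$ u(t)=\tfrac{1}{2}\left(L^2+\mu^2+2c^2\right)t^2-(L+\mu)t +\tfrac{1}{2}(L-\mu)t\sqrt{(Lt + \mu t - 2)^2 + 4c^2t^2}. $$ Then $u$ is convex on $I$ and $u(I)\subseteq [-1, 0)$. *)

theory Defs
  imports "HOL-Analysis.Analysis"
begin

end

theory Submission
  imports Defs
begin

(* For t >= 0, u(t) is the largest eigenvalue of the symmetric matrix
   M(t) = t^2 G^2 - 2 t diag(mu, L) with G = [[mu, c], [c, -L]].  Hence u is the pointwise
   maximum of the Rayleigh quotients t^2 |G v|^2 - 2 t v' diag(mu, L) v over unit vectors v,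
   each a convex quadratic in t, so u is convex.  On I the top-left entry of M(t) is negative
   and det M(t) = t^2 ((mu L + c^2) t - 2 mu) ((mu L + c^2) t - 2 L) is positive, so M(t) is
   negative definite and u(t) < 0; and u(t) >= M(t)_11 = (mu t - 1)^2 + (c t)^2 - 1 >= -1. *)

(* largest eigenvalue of the symmetric matrix [[p, r], [r, q]] *)
definition eig_max :: "real \<Rightarrow> real \<Rightarrow> real \<Rightarrow> real" where
  "eig_max p q r = (p + q) / 2 + sqrt (((p - q) / 2)^2 + r^2)"

lemma inner_le_sqrt_sum_squares:
  fixes a b d e :: real
  assumes "a^2 + b^2 = 1"
  shows "d * a + e * b \<le> sqrt (d^2 + e^2)"
proof (rule real_le_rsqrt)
  have "(d * a + e * b)^2 + (d * b - e * a)^2 = (d^2 + e^2) * (a^2 + b^2)"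
    by (simp add: power2_eq_square algebra_simps)
  then show "(d * a + e * b)^2 \<le> d^2 + e^2"
    using assms zero_le_power2[of "d * b - e * a"] by (simp, linarith)
qed

lemma sqrt_sum_squares_attained:
  fixes d e :: real
  shows "\<exists>a b. a^2 + b^2 = 1 \<and> d * a + e * b = sqrt (d^2 + e^2)"
proof (cases "d^2 + e^2 = 0")
  case True
  then show ?thesis by (intro exI[of _ 1] exI[of _ 0]) simp
next
  case False
  define R where "R = sqrt (d^2 + e^2)"
  have "R > 0" and R2: "d^2 + e^2 = R^2"
    using False by (simp_all add: R_def sum_power2_gt_zero_iff)
  have "(d / R)^2 + (e / R)^2 = 1"
    using \<open>R > 0\<close> R2 by (simp add: power_divide add_divide_distrib[symmetric])
  moreover have "d * (d / R) + e * (e / R) = R"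
    using \<open>R > 0\<close> R2 by (simp add: power2_eq_square field_simps)
  ultimately show ?thesis unfolding R_def by blast
qed

lemma quadratic_form_double_angle:
  fixes p q r x y :: real
  shows "p * x^2 + 2 * r * x * y + q * y^2
    = (p + q) / 2 * (x^2 + y^2) + (p - q) / 2 * (x^2 - y^2) + r * (2 * x * y)"
  by (simp add: field_simps)

lemma quadratic_form_le_eig_max:
  fixes p q r x y :: real
  assumes "x^2 + y^2 = 1"
  shows "p * x^2 + 2 * r * x * y + q * y^2 \<le> eig_max p q r"
proof -
  have "(x^2 - y^2)^2 + (2 * x * y)^2 = (x^2 + y^2)^2"
    by (simp add: power2_eq_square algebra_simps)
  then have "(x^2 - y^2)^2 + (2 * x * y)^2 = 1"
    using assms by simp
  from inner_le_sqrt_sum_squares[OF this, of "(p - q) / 2" r]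
  show ?thesis
    unfolding quadratic_form_double_angle eig_max_def assms by simp
qed

lemma eig_max_attained:
  fixes p q r :: real
  shows "\<exists>x y. x^2 + y^2 = 1 \<and> p * x^2 + 2 * r * x * y + q * y^2 = eig_max p q r"
proof -
  obtain a b where ab: "a^2 + b^2 = 1"
    "(p - q) / 2 * a + r * b = sqrt (((p - q) / 2)^2 + r^2)"
    using sqrt_sum_squares_attained by blast
  obtain \<theta> where "a = cos \<theta>" "b = sin \<theta>"
    using sincos_total_2pi[OF ab(1)] by metis
  \<comment> \<open>the eigenvector is the half-angle vector\<close>
  then have "cos (\<theta>/2)^2 - sin (\<theta>/2)^2 = a" "2 * cos (\<theta>/2) * sin (\<theta>/2) = b"
    using cos_double[of "\<theta>/2"] sin_double[of "\<theta>/2"] by simp_all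
  then show ?thesis
    using ab(2) unfolding quadratic_form_double_angle eig_max_def
    by (intro exI[of _ "cos (\<theta>/2)"] exI[of _ "sin (\<theta>/2)"]) simp
qed

lemma eig_max_ge_left:
  fixes p q r :: real
  shows "p \<le> eig_max p q r"
  using quadratic_form_le_eig_max[of 1 0 p r q] by simp

lemma eig_max_neg:
  fixes p q r :: real
  assumes "p < 0" and "r^2 < p * q"
  shows "eig_max p q r < 0"
proof -
  have "p * q > 0"
    using assms(2) zero_le_power2[of r] by linarith
  then have "q < 0"
    using \<open>p < 0\<close> by (simp add: zero_less_mult_iff)
  have "((p - q) / 2)^2 + r^2 < ((p + q) / 2)^2"
    using assms(2) by (simp add: power2_eq_square field_simps)
  then have "sqrt (((p - q) / 2)^2 + r^2) < sqrt (((p + q) / 2)^2)"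
    by (rule real_sqrt_less_mono)
  also have "\<dots> = \<bar>(p + q) / 2\<bar>"
    by (rule real_sqrt_abs)
  also have "\<dots> = - ((p + q) / 2)"
    using \<open>p < 0\<close> \<open>q < 0\<close> by (intro abs_of_neg) simp
  finally show ?thesis
    unfolding eig_max_def by simp
qed

lemma convex_on_quadratic:
  fixes A B :: real and S :: "real set"
  assumes "0 \<le> A" and "convex S"
  shows "convex_on S (\<lambda>t. A * t^2 + B * t)"
proof (rule convex_on_subset[OF _ subset_UNIV \<open>convex S\<close>], rule convex_on_add)
  show "convex_on UNIV (\<lambda>t. A * t^2)"
    using convex_on_cmul[OF \<open>0 \<le> A\<close> convex_power2] by simp
  show "convex_on UNIV (\<lambda>t. B * t)"
    by (simp add: convex_on_def algebra_simps)
qed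

lemma convex_on_attained_max:
  fixes g :: "'a::real_vector \<Rightarrow> real"
  assumes "convex S"
    and "\<And>i. i \<in> I \<Longrightarrow> convex_on S (f i)"
    and "\<And>i x. i \<in> I \<Longrightarrow> x \<in> S \<Longrightarrow> f i x \<le> g x"
    and "\<And>x. x \<in> S \<Longrightarrow> \<exists>i\<in>I. f i x = g x"
  shows "convex_on S g"
proof (rule convex_onI[OF _ \<open>convex S\<close>])
  fix t :: real and x y :: 'a
  assume t: "0 < t" "t < 1" and "x \<in> S" "y \<in> S"
  let ?z = "(1 - t) *\<^sub>R x + t *\<^sub>R y"
  have "?z \<in> S"
    using convexD_alt[OF \<open>convex S\<close> \<open>x \<in> S\<close> \<open>y \<in> S\<close>, of t] t
    by (simp add: algebra_simps)
  then obtain i where "i \<in> I" and "g ?z = f i ?z"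
    using assms(4) by metis
  have "g ?z = f i ?z" by fact
  also have "\<dots> \<le> (1 - t) * f i x + t * f i y"
    using convex_onD[OF assms(2)[OF \<open>i \<in> I\<close>]] t \<open>x \<in> S\<close> \<open>y \<in> S\<close> by simp
  also have "\<dots> \<le> (1 - t) * g x + t * g y"
    using assms(3)[OF \<open>i \<in> I\<close>] t \<open>x \<in> S\<close> \<open>y \<in> S\<close>
    by (intro add_mono mult_left_mono) auto
  finally show "g ?z \<le> (1 - t) * g x + t * g y" .
qed

lemma convex_on_eq:
  fixes f g :: "'a::real_vector \<Rightarrow> real"
  assumes "convex_on S f" and "\<And>x. x \<in> S \<Longrightarrow> f x = g x"
  shows "convex_on S g"
proof (rule convex_onI[OF _ convex_on_imp_convex[OF assms(1)]])
  fix t :: real and x y :: 'a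
  assume "0 < t" "t < 1" "x \<in> S" "y \<in> S"
  moreover from this have "(1 - t) *\<^sub>R x + t *\<^sub>R y \<in> S"
    using convexD_alt[OF convex_on_imp_convex[OF assms(1)], of x y t]
    by (simp add: algebra_simps)
  ultimately show "g ((1 - t) *\<^sub>R x + t *\<^sub>R y) \<le> (1 - t) * g x + t * g y"
    using convex_onD[OF assms(1), of t x y] assms(2) by simp
qed

lemma convex_on_eig_max:
  fixes p q r :: "real \<Rightarrow> real"
  assumes "convex S"
    and "\<And>x y. x^2 + y^2 = 1 \<Longrightarrow> convex_on S (\<lambda>t. p t * x^2 + 2 * r t * x * y + q t * y^2)"
  shows "convex_on S (\<lambda>t. eig_max (p t) (q t) (r t))"
proof (rule convex_on_attained_max[where I = "{(x, y). x^2 + y^2 = 1}"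
      and f = "\<lambda>(x, y) t. p t * x^2 + 2 * r t * x * y + q t * y^2"])
  fix t
  obtain x y where "x^2 + y^2 = 1"
    and "p t * x^2 + 2 * r t * x * y + q t * y^2 = eig_max (p t) (q t) (r t)"
    using eig_max_attained by blast
  then show "\<exists>i \<in> {(x, y). x^2 + y^2 = 1}.
      (\<lambda>(x, y) t. p t * x^2 + 2 * r t * x * y + q t * y^2) i t = eig_max (p t) (q t) (r t)"
    by auto
qed (use assms quadratic_form_le_eig_max in auto)

definition m11 :: "real \<Rightarrow> real \<Rightarrow> real \<Rightarrow> real" where
  "m11 \<mu> c t = t^2 * (\<mu>^2 + c^2) - 2 * \<mu> * t"

definition m22 :: "real \<Rightarrow> real \<Rightarrow> real \<Rightarrow> real" where
  "m22 L c t = t^2 * (c^2 + L^2) - 2 * L * t"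

definition m12 :: "real \<Rightarrow> real \<Rightarrow> real \<Rightarrow> real \<Rightarrow> real" where
  "m12 \<mu> L c t = t^2 * c * (\<mu> - L)"

lemma u_eq_eig_max:
  fixes \<mu> L c t :: real
  assumes "\<mu> \<le> L" and "0 \<le> t"
  shows "(1/2) * (L^2 + \<mu>^2 + 2 * c^2) * t^2 - (L + \<mu>) * t
           + (1/2) * (L - \<mu>) * t * sqrt ((L * t + \<mu> * t - 2)^2 + 4 * c^2 * t^2)
       = eig_max (m11 \<mu> c t) (m22 L c t) (m12 \<mu> L c t)"
proof -
  have "((m11 \<mu> c t - m22 L c t) / 2)^2 + (m12 \<mu> L c t)^2
      = ((L - \<mu>) * t / 2)^2 * ((L * t + \<mu> * t - 2)^2 + 4 * c^2 * t^2)"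
    unfolding m11_def m22_def m12_def by (simp add: power2_eq_square field_simps)
  then have "sqrt (((m11 \<mu> c t - m22 L c t) / 2)^2 + (m12 \<mu> L c t)^2)
      = (L - \<mu>) * t / 2 * sqrt ((L * t + \<mu> * t - 2)^2 + 4 * c^2 * t^2)"
    using assms by (simp add: real_sqrt_mult)
  then show ?thesis
    unfolding eig_max_def by (simp add: m11_def m22_def power2_eq_square field_simps)
qed

lemma convex_on_quadratic_form_m:
  fixes \<mu> L c x y :: real and S :: "real set"
  assumes "convex S"
  shows "convex_on S (\<lambda>t. m11 \<mu> c t * x^2 + 2 * m12 \<mu> L c t * x * y + m22 L c t * y^2)"
proof -
  have "m11 \<mu> c t * x^2 + 2 * m12 \<mu> L c t * x * y + m22 L c t * y^2
      = ((\<mu> * x + c * y)^2 + (c * x - L * y)^2) * t^2 + (- 2 * (\<mu> * x^2 + L * y^2)) * t" for t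
    unfolding m11_def m22_def m12_def by (simp add: power2_eq_square algebra_simps)
  then show ?thesis
    using convex_on_quadratic[OF _ assms] by simp
qed

lemma m11_ge_minus_one: "-1 \<le> m11 \<mu> c t"
proof -
  have "m11 \<mu> c t = (\<mu> * t - 1)^2 + (c * t)^2 - 1"
    unfolding m11_def by (simp add: power2_eq_square algebra_simps)
  then show ?thesis
    by simp
qed

lemma m11_neg:
  assumes "0 < \<mu>" and "\<mu> \<le> L" and "0 < t" and "(\<mu> * L + c^2) * t < 2 * \<mu>"
  shows "m11 \<mu> c t < 0"
proof -
  have "(\<mu>^2 + c^2) * t \<le> (\<mu> * L + c^2) * t"
    using assms(1-3) by (simp add: power2_eq_square)
  then have "(\<mu>^2 + c^2) * t - 2 * \<mu> < 0"
    using assms(4) by linarith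
  moreover have "m11 \<mu> c t = t * ((\<mu>^2 + c^2) * t - 2 * \<mu>)"
    unfolding m11_def by (simp add: power2_eq_square algebra_simps)
  ultimately show ?thesis
    using \<open>0 < t\<close> by (simp add: mult_pos_neg)
qed

lemma m12_sq_less_m11_m22:
  assumes "\<mu> \<le> L" and "0 < t" and "(\<mu> * L + c^2) * t < 2 * \<mu>"
  shows "(m12 \<mu> L c t)^2 < m11 \<mu> c t * m22 L c t"
proof -
  have "m11 \<mu> c t * m22 L c t - (m12 \<mu> L c t)^2
      = t^2 * (((\<mu> * L + c^2) * t - 2 * \<mu>) * ((\<mu> * L + c^2) * t - 2 * L))"
    unfolding m11_def m22_def m12_def by (simp add: power2_eq_square algebra_simps)
  moreover have "((\<mu> * L + c^2) * t - 2 * \<mu>) * ((\<mu> * L + c^2) * t - 2 * L) > 0"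
    using assms by (intro mult_neg_neg) auto
  ultimately have "m11 \<mu> c t * m22 L c t - (m12 \<mu> L c t)^2 > 0"
    using \<open>0 < t\<close> by simp
  then show ?thesis
    by simp
qed

theorem lemma2p1:
  fixes \<mu> L c :: real and u :: "real \<Rightarrow> real"
  assumes "0 < \<mu>" and "\<mu> \<le> L" and "0 \<le> c"
    and "u = (\<lambda>t. (1/2) * (L^2 + \<mu>^2 + 2 * c^2) * t^2 - (L + \<mu>) * t
               + (1/2) * (L - \<mu>) * t * sqrt ((L * t + \<mu> * t - 2)^2 + 4 * c^2 * t^2))"
  shows "convex_on {0<..<2 * \<mu> / (\<mu> * L + c^2)} u
         \<and> u ` {0<..<2 * \<mu> / (\<mu> * L + c^2)} \<subseteq> {-1..<0}"
proof -
  let ?I = "{0<..<2 * \<mu> / (\<mu> * L + c^2)}"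
  have u_eig: "u t = eig_max (m11 \<mu> c t) (m22 L c t) (m12 \<mu> L c t)" if "t \<in> ?I" for t
    using that u_eq_eig_max[OF \<open>\<mu> \<le> L\<close>, of t c] unfolding assms(4) by simp
  have "convex_on ?I (\<lambda>t. eig_max (m11 \<mu> c t) (m22 L c t) (m12 \<mu> L c t))"
    by (intro convex_on_eig_max convex_on_quadratic_form_m) simp_all
  then have "convex_on ?I u"
    by (rule convex_on_eq) (simp add: u_eig)
  moreover have "u t \<in> {-1..<0}" if "t \<in> ?I" for t
  proof -
    have "\<mu> * L + c^2 > 0"
      using assms(1-3) by (simp add: add_pos_nonneg)
    then have "0 < t" and kt: "(\<mu> * L + c^2) * t < 2 * \<mu>"
      using that by (auto simp: field_simps)
    have "-1 \<le> u t"
      using u_eig[OF that] eig_max_ge_left[of "m11 \<mu> c t" "m22 L c t" "m12 \<mu> L c t"]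
        m11_ge_minus_one[of \<mu> c t] by linarith
    moreover have "u t < 0"
      using u_eig[OF that] eig_max_neg[OF m11_neg[OF assms(1,2) \<open>0 < t\<close> kt]
          m12_sq_less_m11_m22[OF assms(2) \<open>0 < t\<close> kt]] by simp
    ultimately show ?thesis
      by simp
  qed
  ultimately show ?thesis
    by blast
qed

end
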